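(* Let $(a_n)_{n\ge0}$ be nonzero complex numbers with $|a_0|\ge|a_1|\ge\cdots$ and $\sum_n|a_n|^2<\infty$, let $T$ be the weighted shift $Te_n=a_ne_{n+1}$, and let $(c_k)_{k\ge1}$ be complex numbers. Then the sequence $p_n(T)=\sum_{k=1}^nc_kT^k$ converges in operator norm (to an element of $\mathcal A_T$) if and only if $\sum_{k=1}^\infty|c_k|^2|a_0a_1\cdots a_{k-1}|^2<\infty$.
   Context: $H$ is a complex Hilbert space with orthonormal basis $\{e_n\}_{n\ge0}$, $Te_n=a_ne_{n+1}$, and $\mathcal A_T$ is the operator-norm closure in $\mathcal B(H)$ of the polynomials $p(T)$ with $p(0)=0$. *)

theory Defs
  imports Complex_Main
begin

text \<open>Concrete model: H = l2(N) over the complex numbers, with orthonormal basis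
  e_n = indicator of n. Vectors are functions nat => complex; operators are
  functions on such vectors, only their action on l2 matters.\<close>

definition l2 :: "(nat \<Rightarrow> complex) set" where
  "l2 = {x. summable (\<lambda>n. (cmod (x n))\<^sup>2)}"

definition l2norm :: "(nat \<Rightarrow> complex) \<Rightarrow> real" where
  "l2norm x = sqrt (\<Sum>n. (cmod (x n))\<^sup>2)"

definition bounded_op :: "((nat \<Rightarrow> complex) \<Rightarrow> (nat \<Rightarrow> complex)) \<Rightarrow> bool" where
  "bounded_op A \<longleftrightarrow>
     (\<forall>x\<in>l2. A x \<in> l2) \<and>
     (\<forall>x\<in>l2. \<forall>y\<in>l2. A (\<lambda>n. x n + y n) = (\<lambda>n. A x n + A y n)) \<and>
     (\<forall>x\<in>l2. \<forall>c. A (\<lambda>n. c * x n) = (\<lambda>n. c * A x n)) \<and>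
     (\<exists>C. \<forall>x\<in>l2. l2norm (A x) \<le> C * l2norm x)"

definition opnorm :: "((nat \<Rightarrow> complex) \<Rightarrow> (nat \<Rightarrow> complex)) \<Rightarrow> real" where
  "opnorm A = (SUP x\<in>{x\<in>l2. l2norm x \<le> 1}. l2norm (A x))"

text \<open>Weighted shift: T e_n = a_n e_(n+1).\<close>
definition wshift :: "(nat \<Rightarrow> complex) \<Rightarrow> (nat \<Rightarrow> complex) \<Rightarrow> (nat \<Rightarrow> complex)" where
  "wshift a x = (\<lambda>m. if m = 0 then 0 else a (m - 1) * x (m - 1))"

definition poly_shift ::
  "(nat \<Rightarrow> complex) \<Rightarrow> (nat \<Rightarrow> complex) \<Rightarrow> nat \<Rightarrow> (nat \<Rightarrow> complex) \<Rightarrow> (nat \<Rightarrow> complex)" where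
  "poly_shift a c n x = (\<lambda>m. \<Sum>k=1..n. c k * (wshift a ^^ k) x m)"

end

theory Submission
  imports Defs "HOL-Analysis.Convex" "HOL-Analysis.Measure_Space"
begin

text \<open>
  If \<open>p\<^sub>n(T) \<rightarrow> L\<close> in operator norm, then in particular
  \<open>p\<^sub>n(T) e\<^sub>0 \<rightarrow> L e\<^sub>0\<close>; since \<open>p\<^sub>n(T) e\<^sub>0\<close> has \<open>m\<close>-th coordinate \<open>c\<^sub>m a\<^sub>0\<cdots>a\<^sub>m\<^sub>-\<^sub>1\<close> for
  \<open>1 \<le> m \<le> n\<close>, these are the coordinates of \<open>L e\<^sub>0 \<in> \<ell>\<^sup>2\<close>, which gives the summability condition.

  Conversely, the formal series \<open>\<Sum>\<^sub>k d\<^sub>k T\<^sup>k\<close> makes sense coordinatewise. Because the weights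
  decrease, \<open>|a\<^sub>i\<cdots>a\<^sub>i\<^sub>+\<^sub>k\<^sub>-\<^sub>1| |a\<^sub>0| \<le> |a\<^sub>0\<cdots>a\<^sub>k\<^sub>-\<^sub>1| |a\<^sub>k|\<close> for \<open>i \<ge> 1\<close>, so Cauchy-Schwarz in each
  coordinate followed by summation over the coordinates (a convolution with the summable
  sequence \<open>|a\<^sub>k|\<^sup>2\<close>) bounds its operator norm by a constant times
  \<open>(\<Sum>\<^sub>k |d\<^sub>k a\<^sub>0\<cdots>a\<^sub>k\<^sub>-\<^sub>1|\<^sup>2)\<^sup>1\<^sup>/\<^sup>2\<close>. Applied to the tail \<open>d\<^sub>k = c\<^sub>k [k > n]\<close> this shows
  \<open>p\<^sub>n(T) \<rightarrow> \<Sum>\<^sub>k c\<^sub>k T\<^sup>k\<close> in operator norm.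
\<close>

lemma l2_partial_sums_bounded:
  assumes "\<And>M. (\<Sum>m<M. (cmod (y m))\<^sup>2) \<le> B"
  shows "y \<in> l2" "l2norm y \<le> sqrt B"
proof -
  have "summable (\<lambda>m. (cmod (y m))\<^sup>2)"
    by (rule bounded_imp_summable[where B=B]) (use assms[of "Suc _"] in \<open>auto simp: lessThan_Suc_atMost\<close>)
  then show "y \<in> l2" "l2norm y \<le> sqrt B"
    unfolding l2_def l2norm_def using suminf_le_const assms by auto
qed

lemma l2norm_nonneg: "x \<in> l2 \<Longrightarrow> 0 \<le> l2norm x"
  by (simp add: l2norm_def l2_def suminf_nonneg)

lemma partial_sum_le_l2norm: "x \<in> l2 \<Longrightarrow> (\<Sum>m\<in>I. (cmod (x m))\<^sup>2) \<le> (l2norm x)\<^sup>2"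
  unfolding l2norm_def l2_def
  by (cases "finite I") (simp_all add: sum_le_suminf suminf_nonneg)

lemma norm_le_l2norm: "x \<in> l2 \<Longrightarrow> cmod (x m) \<le> l2norm x"
  using partial_sum_le_l2norm[of x "{m}"] l2norm_nonneg[of x] by (simp add: abs_le_square_iff)

lemma l2_diff:
  assumes "y \<in> l2" "z \<in> l2"
  shows "(\<lambda>m. y m - z m) \<in> l2"
    and "l2norm (\<lambda>m. y m - z m) \<le> sqrt (2 * (l2norm y)\<^sup>2 + 2 * (l2norm z)\<^sup>2)"
proof -
  have "(cmod (y m - z m))\<^sup>2 \<le> 2 * (cmod (y m))\<^sup>2 + 2 * (cmod (z m))\<^sup>2" for m
  proof -
    have "(cmod (y m - z m))\<^sup>2 \<le> (cmod (y m) + cmod (z m))\<^sup>2"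
      by (intro power_mono norm_triangle_ineq4) simp
    moreover have "0 \<le> (cmod (y m) - cmod (z m))\<^sup>2" by simp
    ultimately show ?thesis unfolding power2_sum power2_diff by linarith
  qed
  then have partial: "(\<Sum>m<M. (cmod (y m - z m))\<^sup>2)
      \<le> 2 * (\<Sum>m<M. (cmod (y m))\<^sup>2) + 2 * (\<Sum>m<M. (cmod (z m))\<^sup>2)" for M
    by (simp add: sum_mono sum_distrib_left flip: sum.distrib)
  have "(\<Sum>m<M. (cmod (y m - z m))\<^sup>2) \<le> 2 * (l2norm y)\<^sup>2 + 2 * (l2norm z)\<^sup>2" for M
    using partial[of M] partial_sum_le_l2norm[OF assms(1), of "{..<M}"]
      partial_sum_le_l2norm[OF assms(2), of "{..<M}"]
    by linarith
  then show "(\<lambda>m. y m - z m) \<in> l2"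
    and "l2norm (\<lambda>m. y m - z m) \<le> sqrt (2 * (l2norm y)\<^sup>2 + 2 * (l2norm z)\<^sup>2)"
    by (fact l2_partial_sums_bounded)+
qed

lemma l2_uminus_iff: "(\<lambda>m. - y m) \<in> l2 \<longleftrightarrow> y \<in> l2"
  by (simp add: l2_def)

lemma l2norm_uminus: "l2norm (\<lambda>m. - y m) = l2norm y"
  by (simp add: l2norm_def)

lemma opnorm_le:
  assumes "\<And>x. x \<in> l2 \<Longrightarrow> l2norm x \<le> 1 \<Longrightarrow> l2norm (A x) \<le> B"
  shows "opnorm A \<le> B"
  unfolding opnorm_def
proof (rule cSUP_least)
  show "{x \<in> l2. l2norm x \<le> 1} \<noteq> {}"
    using l2_partial_sums_bounded[of "\<lambda>_. 0" 0] by force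
qed (use assms in auto)

lemma l2norm_le_opnorm:
  assumes "\<And>x. x \<in> l2 \<Longrightarrow> l2norm x \<le> 1 \<Longrightarrow> l2norm (A x) \<le> B"
    and "y \<in> l2" "l2norm y \<le> 1"
  shows "l2norm (A y) \<le> opnorm A"
  unfolding opnorm_def by (rule cSUP_upper) (use assms in \<open>auto intro!: bdd_aboveI2\<close>)

lemma bounded_op_unit_ball:
  assumes "bounded_op A"
  obtains C where "\<And>x. x \<in> l2 \<Longrightarrow> l2norm x \<le> 1 \<Longrightarrow> A x \<in> l2 \<and> l2norm (A x) \<le> C"
proof -
  obtain C where C: "\<And>x. x \<in> l2 \<Longrightarrow> l2norm (A x) \<le> C * l2norm x" and l2: "\<And>x. x \<in> l2 \<Longrightarrow> A x \<in> l2"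
    using assms unfolding bounded_op_def by blast
  have "l2norm (A x) \<le> \<bar>C\<bar>" if "x \<in> l2" "l2norm x \<le> 1" for x
  proof -
    have "C * l2norm x \<le> \<bar>C\<bar> * l2norm x"
      using l2norm_nonneg[OF that(1)] by (intro mult_right_mono) auto
    also have "\<dots> \<le> \<bar>C\<bar>"
      using that(2) by (intro mult_left_le) auto
    finally show ?thesis using C[OF that(1)] by linarith
  qed
  with l2 show thesis by (intro that) blast
qed

lemma bounded_op_diff_unit_ball:
  assumes "bounded_op A" "bounded_op B"
  obtains C where "\<And>x. x \<in> l2 \<Longrightarrow> l2norm x \<le> 1 \<Longrightarrow>
    (\<lambda>m. A x m - B x m) \<in> l2 \<and> l2norm (\<lambda>m. A x m - B x m) \<le> C"
proof -
  obtain CA where CA: "\<And>x. x \<in> l2 \<Longrightarrow> l2norm x \<le> 1 \<Longrightarrow> A x \<in> l2 \<and> l2norm (A x) \<le> CA"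
    using bounded_op_unit_ball[OF assms(1)] by blast
  obtain CB where CB: "\<And>x. x \<in> l2 \<Longrightarrow> l2norm x \<le> 1 \<Longrightarrow> B x \<in> l2 \<and> l2norm (B x) \<le> CB"
    using bounded_op_unit_ball[OF assms(2)] by blast
  have "(\<lambda>m. A x m - B x m) \<in> l2 \<and> l2norm (\<lambda>m. A x m - B x m) \<le> sqrt (2 * CA\<^sup>2 + 2 * CB\<^sup>2)"
    if "x \<in> l2" "l2norm x \<le> 1" for x
  proof -
    have A: "A x \<in> l2" "(l2norm (A x))\<^sup>2 \<le> CA\<^sup>2"
      using CA[OF that] l2norm_nonneg[of "A x"] by (auto intro: power_mono)
    have B: "B x \<in> l2" "(l2norm (B x))\<^sup>2 \<le> CB\<^sup>2"
      using CB[OF that] l2norm_nonneg[of "B x"] by (auto intro: power_mono)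
    have "l2norm (\<lambda>m. A x m - B x m) \<le> sqrt (2 * (l2norm (A x))\<^sup>2 + 2 * (l2norm (B x))\<^sup>2)"
      by (rule l2_diff(2)[OF A(1) B(1)])
    also have "\<dots> \<le> sqrt (2 * CA\<^sup>2 + 2 * CB\<^sup>2)"
      using A(2) B(2) by simp
    finally show ?thesis using l2_diff(1)[OF A(1) B(1)] by blast
  qed
  then show thesis by (rule that)
qed

lemma sum_convolution_le_product:
  fixes f g :: "nat \<Rightarrow> real"
  assumes "\<And>i. 0 \<le> f i" "\<And>i. 0 \<le> g i"
  shows "(\<Sum>n<M. \<Sum>k<n. f k * g (n - k)) \<le> (\<Sum>k<M. f k) * (\<Sum>i<M. g i)"
proof -
  have "(\<Sum>n<M. \<Sum>k<n. f k * g (n - k)) \<le> (\<Sum>n<M. \<Sum>k\<le>n. f k * g (n - k))"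
    by (intro sum_mono sum_mono2) (auto intro: mult_nonneg_nonneg assms)
  also have "\<dots> = (\<Sum>(i, j)\<in>{(i, j). i + j < M}. f i * g j)"
    by (rule sum.triangle_reindex[symmetric])
  also have "\<dots> \<le> (\<Sum>(i, j)\<in>{..<M} \<times> {..<M}. f i * g j)"
    by (rule sum_mono2) (auto intro: mult_nonneg_nonneg assms)
  also have "\<dots> = (\<Sum>k<M. f k) * (\<Sum>i<M. g i)"
    by (simp add: sum_product sum.cartesian_product)
  finally show ?thesis .
qed

lemma wshift_power:
  "(wshift a ^^ k) x m = (if k \<le> m then (\<Prod>j<k. a (m - k + j)) * x (m - k) else 0)"
proof (induction k arbitrary: m)
  case 0
  then show ?case by simp
next
  case (Suc k)
  show ?case
  proof (cases "Suc k \<le> m")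
    case True
    then have "k \<le> m - 1" "m - 1 - k = m - Suc k" "m - Suc k + k = m - 1" by auto
    have "(wshift a ^^ Suc k) x m = a (m - 1) * (wshift a ^^ k) x (m - 1)"
      using True by (simp add: wshift_def)
    also have "\<dots> = a (m - Suc k + k) * ((\<Prod>j<k. a (m - Suc k + j)) * x (m - Suc k))"
      by (simp only: Suc.IH \<open>k \<le> m - 1\<close> \<open>m - 1 - k = m - Suc k\<close> \<open>m - Suc k + k = m - 1\<close> if_True)
    also have "\<dots> = (\<Prod>j<Suc k. a (m - Suc k + j)) * x (m - Suc k)"
      by (simp only: prod.lessThan_Suc mult_ac)
    finally show ?thesis using True by simp
  next
    case False
    have "(wshift a ^^ Suc k) x m = (if m = 0 then 0 else a (m - 1) * (wshift a ^^ k) x (m - 1))"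
      by (simp add: wshift_def)
    moreover have "m = 0 \<or> \<not> k \<le> m - 1" using False by arith
    ultimately show ?thesis using False Suc.IH[of "m - 1"] by auto
  qed
qed

lemma norm_prod_shifted_le:
  assumes mono: "\<And>n. cmod (a (Suc n)) \<le> cmod (a n)" and "1 \<le> i"
  shows "cmod (\<Prod>j<k. a (i + j)) * cmod (a 0) \<le> cmod (\<Prod>j<k. a j) * cmod (a k)"
proof -
  have "cmod (\<Prod>j<k. a (i + j)) \<le> (\<Prod>j<k. cmod (a (Suc j)))"
    unfolding prod_norm[symmetric]
    by (intro prod_mono conjI norm_ge_zero lift_Suc_antimono_le[of "\<lambda>n. cmod (a n)", OF mono])
       (use assms(2) in auto)
  moreover have "cmod (\<Prod>j<k. a j) * cmod (a k) = cmod (\<Prod>j<Suc k. a j)"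
    by (simp add: norm_mult)
  then have "cmod (\<Prod>j<k. a j) * cmod (a k) = cmod (a 0) * (\<Prod>j<k. cmod (a (Suc j)))"
    by (simp only: prod.lessThan_Suc_shift norm_mult prod_norm)
  ultimately show ?thesis by (simp add: mult.commute mult_left_mono)
qed

text \<open>The series \<open>\<Sum>\<^sub>k\<^sub>\<ge>\<^sub>1 d\<^sub>k T\<^sup>k\<close> applied to \<open>x\<close>; it is a finite sum in each coordinate because
  \<open>(T\<^sup>k x)\<^sub>m = 0\<close> for \<open>k > m\<close>. The coefficient \<open>d 0\<close> is ignored.\<close>

definition shift_series ::
  "(nat \<Rightarrow> complex) \<Rightarrow> (nat \<Rightarrow> complex) \<Rightarrow> (nat \<Rightarrow> complex) \<Rightarrow> nat \<Rightarrow> complex" where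
  "shift_series a d x m = (\<Sum>k=1..m. d k * (wshift a ^^ k) x m)"

text \<open>\<open>coeff_weight a d k = \<parallel>d\<^sub>k T\<^sup>k e\<^sub>0\<parallel>\<close>.\<close>

definition coeff_weight :: "(nat \<Rightarrow> complex) \<Rightarrow> (nat \<Rightarrow> complex) \<Rightarrow> nat \<Rightarrow> real" where
  "coeff_weight a d k = cmod (d k) * cmod (\<Prod>j<k. a j)"

definition shift_norm_const :: "(nat \<Rightarrow> complex) \<Rightarrow> real" where
  "shift_norm_const a = 2 + 2 * (\<Sum>n. (cmod (a n))\<^sup>2) / (cmod (a 0))\<^sup>2"

lemma shift_norm_const_nonneg: "summable (\<lambda>n. (cmod (a n))\<^sup>2) \<Longrightarrow> 0 \<le> shift_norm_const a"
  unfolding shift_norm_const_def by (intro add_nonneg_nonneg divide_nonneg_nonneg mult_nonneg_nonneg suminf_nonneg) auto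

lemma shift_series_coord_bound:
  assumes a0: "a 0 \<noteq> 0" and mono: "\<And>n. cmod (a (Suc n)) \<le> cmod (a n)"
    and B: "\<And>M. (\<Sum>k<M. (coeff_weight a d k)\<^sup>2) \<le> B"
  shows "(cmod (shift_series a d x m))\<^sup>2
    \<le> 2 * (coeff_weight a d m)\<^sup>2 * (cmod (x 0))\<^sup>2
      + 2 * B * (\<Sum>k<m. (cmod (a k))\<^sup>2 * (cmod (x (m - k)))\<^sup>2) / (cmod (a 0))\<^sup>2"
    (is "_ \<le> ?rhs")
proof (cases "m = 0")
  case True
  have "0 \<le> B" using B[of 0] by simp
  then have "0 \<le> ?rhs" by (intro add_nonneg_nonneg divide_nonneg_nonneg mult_nonneg_nonneg sum_nonneg) auto
  then show ?thesis using True by (simp add: shift_series_def)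
next
  case False
  define b where "b k = cmod (a k) / cmod (a 0) * cmod (x (m - k))" for k
  define u where "u = coeff_weight a d m * cmod (x 0)"
  define v where "v = (\<Sum>k\<in>{1..<m}. coeff_weight a d k * b k)"
  have split: "shift_series a d x m = d m * (wshift a ^^ m) x m + (\<Sum>k\<in>{1..<m}. d k * (wshift a ^^ k) x m)"
  proof -
    have "{1..m} = insert m {1..<m}" using False by auto
    then show ?thesis by (simp add: shift_series_def)
  qed
  have head: "cmod (d m * (wshift a ^^ m) x m) = u"
    by (simp add: u_def coeff_weight_def wshift_power norm_mult)
  \<comment> \<open>Only the terms with \<open>k < m\<close> see a shifted product of weights, which monotonicity controls.\<close>
  have "cmod (d k * (wshift a ^^ k) x m) \<le> coeff_weight a d k * b k" if k: "k \<in> {1..<m}" for k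
  proof -
    have "1 \<le> m - k" using k by auto
    have w: "cmod (\<Prod>j<k. a (m - k + j)) \<le> cmod (\<Prod>j<k. a j) * (cmod (a k) / cmod (a 0))"
      using norm_prod_shifted_le[where a=a, OF mono \<open>1 \<le> m - k\<close>, of k] a0
      by (simp add: field_simps)
    have "cmod (d k * (wshift a ^^ k) x m) = cmod (d k) * cmod (\<Prod>j<k. a (m - k + j)) * cmod (x (m - k))"
      using k by (simp add: wshift_power norm_mult)
    also have "\<dots> \<le> cmod (d k) * (cmod (\<Prod>j<k. a j) * (cmod (a k) / cmod (a 0))) * cmod (x (m - k))"
      by (intro mult_right_mono mult_left_mono w) auto
    also have "\<dots> = coeff_weight a d k * b k"
      by (simp add: coeff_weight_def b_def)
    finally show ?thesis .
  qed
  then have rest: "cmod (\<Sum>k\<in>{1..<m}. d k * (wshift a ^^ k) x m) \<le> v"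
    unfolding v_def by (intro order.trans[OF norm_sum] sum_mono)
  have "cmod (shift_series a d x m) \<le> u + v"
    unfolding split using head rest by (intro order.trans[OF norm_triangle_ineq]) simp
  then have "(cmod (shift_series a d x m))\<^sup>2 \<le> (u + v)\<^sup>2"
    by (rule power_mono[OF _ norm_ge_zero])
  also have "\<dots> \<le> 2 * u\<^sup>2 + 2 * v\<^sup>2"
    using sum_squares_bound[of u v] by (simp add: power2_sum)
  finally have "(cmod (shift_series a d x m))\<^sup>2 \<le> 2 * u\<^sup>2 + 2 * v\<^sup>2" .
  moreover have "v\<^sup>2 \<le> B * (\<Sum>k<m. (b k)\<^sup>2)"
  proof -
    have "v\<^sup>2 \<le> (\<Sum>k\<in>{1..<m}. (coeff_weight a d k)\<^sup>2) * (\<Sum>k\<in>{1..<m}. (b k)\<^sup>2)"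
      unfolding v_def by (rule Cauchy_Schwarz_ineq_sum)
    also have "\<dots> \<le> B * (\<Sum>k<m. (b k)\<^sup>2)"
    proof (rule mult_mono)
      have "(\<Sum>k\<in>{1..<m}. (coeff_weight a d k)\<^sup>2) \<le> (\<Sum>k<m. (coeff_weight a d k)\<^sup>2)"
        by (rule sum_mono2) auto
      then show "(\<Sum>k\<in>{1..<m}. (coeff_weight a d k)\<^sup>2) \<le> B" using B[of m] by linarith
      show "(\<Sum>k\<in>{1..<m}. (b k)\<^sup>2) \<le> (\<Sum>k<m. (b k)\<^sup>2)" by (rule sum_mono2) auto
    qed (use B[of 0] in \<open>auto intro: sum_nonneg\<close>)
    finally show ?thesis .
  qed
  moreover have "(\<Sum>k<m. (b k)\<^sup>2) = (\<Sum>k<m. (cmod (a k))\<^sup>2 * (cmod (x (m - k)))\<^sup>2) / (cmod (a 0))\<^sup>2"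
    by (simp add: b_def sum_divide_distrib power_mult_distrib power_divide)
  ultimately show ?thesis by (simp add: u_def power_mult_distrib)
qed

lemma shift_series_l2_bound:
  assumes a0: "a 0 \<noteq> 0" and mono: "\<And>n. cmod (a (Suc n)) \<le> cmod (a n)"
    and sq: "summable (\<lambda>n. (cmod (a n))\<^sup>2)"
    and B: "\<And>M. (\<Sum>k<M. (coeff_weight a d k)\<^sup>2) \<le> B"
    and x: "x \<in> l2"
  shows "shift_series a d x \<in> l2"
    and "l2norm (shift_series a d x) \<le> sqrt (shift_norm_const a * B) * l2norm x"
proof -
  define X where "X = (\<Sum>n. (cmod (x n))\<^sup>2)"
  define S where "S = (\<Sum>n. (cmod (a n))\<^sup>2)"
  have xs: "summable (\<lambda>n. (cmod (x n))\<^sup>2)" using x by (simp add: l2_def)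
  have "0 \<le> B" using B[of 0] by simp
  have "(\<Sum>m<M. (cmod (shift_series a d x m))\<^sup>2) \<le> shift_norm_const a * B * X" for M
  proof -
    have x0: "(cmod (x 0))\<^sup>2 \<le> X"
      unfolding X_def using sum_le_suminf[OF xs, of "{0}"] by simp
    have conv: "(\<Sum>m<M. \<Sum>k<m. (cmod (a k))\<^sup>2 * (cmod (x (m - k)))\<^sup>2) \<le> S * X"
      unfolding S_def X_def
      by (rule order.trans[OF sum_convolution_le_product])
         (auto intro!: mult_mono sum_le_suminf sq xs suminf_nonneg sum_nonneg)
    have "(\<Sum>m<M. (cmod (shift_series a d x m))\<^sup>2)
      \<le> 2 * (cmod (x 0))\<^sup>2 * (\<Sum>m<M. (coeff_weight a d m)\<^sup>2)
        + 2 * B * (\<Sum>m<M. \<Sum>k<m. (cmod (a k))\<^sup>2 * (cmod (x (m - k)))\<^sup>2) / (cmod (a 0))\<^sup>2"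
      using sum_mono[OF shift_series_coord_bound[OF a0 mono B, of x]]
      by (simp add: sum.distrib sum_distrib_left sum_divide_distrib mult_ac)
    also have "\<dots> \<le> 2 * X * B + 2 * B * (S * X) / (cmod (a 0))\<^sup>2"
      using x0 B[of M] conv \<open>0 \<le> B\<close> order.trans[OF zero_le_power2 x0]
      by (intro add_mono divide_right_mono mult_left_mono mult_mono sum_nonneg) auto
    also have "\<dots> = shift_norm_const a * B * X"
      using a0 by (simp add: shift_norm_const_def S_def field_simps)
    finally show ?thesis .
  qed
  note bound = l2_partial_sums_bounded[OF this]
  then show "shift_series a d x \<in> l2" by blast
  show "l2norm (shift_series a d x) \<le> sqrt (shift_norm_const a * B) * l2norm x"
    using bound(2) by (simp add: X_def l2norm_def real_sqrt_mult)
qed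

lemma shift_series_add: "shift_series a d (\<lambda>n. x n + y n) m = shift_series a d x m + shift_series a d y m"
  by (simp add: shift_series_def wshift_power distrib_left sum.distrib)

lemma shift_series_scale: "shift_series a d (\<lambda>n. s * x n) m = s * shift_series a d x m"
  by (simp add: shift_series_def wshift_power sum_distrib_left mult_ac)

lemma poly_shift_eq_shift_series:
  "poly_shift a c n x m = shift_series a (\<lambda>k. if k \<le> n then c k else 0) x m"
proof -
  have "poly_shift a c n x m = (\<Sum>k\<in>{1..min n m}. c k * (wshift a ^^ k) x m)"
    unfolding poly_shift_def by (rule sum.mono_neutral_right) (auto simp: wshift_power)
  also have "\<dots> = shift_series a (\<lambda>k. if k \<le> n then c k else 0) x m"
    unfolding shift_series_def by (rule sum.mono_neutral_cong_left) auto
  finally show ?thesis .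
qed

lemma poly_shift_minus_shift_series:
  "poly_shift a c n x m - shift_series a c x m = - shift_series a (\<lambda>k. if n < k then c k else 0) x m"
  unfolding poly_shift_eq_shift_series shift_series_def
  by (simp only: flip: sum_negf sum_subtractf) (rule sum.cong; simp)

lemma coeff_weight_truncate:
  "coeff_weight a (\<lambda>k. if P k then c k else 0) k = (if P k then coeff_weight a c k else 0)"
  by (simp add: coeff_weight_def)

lemma poly_shift_l2_bound:
  assumes a0: "a 0 \<noteq> 0" and mono: "\<And>n. cmod (a (Suc n)) \<le> cmod (a n)"
    and sq: "summable (\<lambda>n. (cmod (a n))\<^sup>2)" and x: "x \<in> l2"
  shows "(\<lambda>m. poly_shift a c n x m) \<in> l2"
    and "l2norm (\<lambda>m. poly_shift a c n x m)
           \<le> sqrt (shift_norm_const a * (\<Sum>k\<le>n. (coeff_weight a c k)\<^sup>2)) * l2norm x"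
proof -
  have "(\<Sum>k<M. (coeff_weight a (\<lambda>k. if k \<le> n then c k else 0) k)\<^sup>2)
      \<le> (\<Sum>k\<le>n. (coeff_weight a c k)\<^sup>2)" for M
  proof -
    have "(\<Sum>k<M. (coeff_weight a (\<lambda>k. if k \<le> n then c k else 0) k)\<^sup>2)
        = (\<Sum>k\<in>{..<M} \<inter> {..n}. (coeff_weight a c k)\<^sup>2)"
      by (auto simp: coeff_weight_truncate sum.inter_restrict intro!: sum.cong)
    also have "\<dots> \<le> (\<Sum>k\<le>n. (coeff_weight a c k)\<^sup>2)"
      by (rule sum_mono2) auto
    finally show ?thesis .
  qed
  note bound = shift_series_l2_bound[OF a0 mono sq this x]
  have "(\<lambda>m. poly_shift a c n x m) = shift_series a (\<lambda>k. if k \<le> n then c k else 0) x"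
    by (rule ext) (rule poly_shift_eq_shift_series)
  then show "(\<lambda>m. poly_shift a c n x m) \<in> l2"
    and "l2norm (\<lambda>m. poly_shift a c n x m)
           \<le> sqrt (shift_norm_const a * (\<Sum>k\<le>n. (coeff_weight a c k)\<^sup>2)) * l2norm x"
    using bound by simp_all
qed

lemma bounded_op_shift_series:
  assumes a0: "a 0 \<noteq> 0" and mono: "\<And>n. cmod (a (Suc n)) \<le> cmod (a n)"
    and sq: "summable (\<lambda>n. (cmod (a n))\<^sup>2)"
    and s: "summable (\<lambda>k. (coeff_weight a c k)\<^sup>2)"
  shows "bounded_op (shift_series a c)"
  unfolding bounded_op_def
proof (intro conjI ballI allI exI)
  have "(\<Sum>k<M. (coeff_weight a c k)\<^sup>2) \<le> (\<Sum>k. (coeff_weight a c k)\<^sup>2)" for M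
    by (rule sum_le_suminf[OF s]) auto
  note bound = shift_series_l2_bound[OF a0 mono sq this]
  fix x y s assume "x \<in> l2"
  show "shift_series a c x \<in> l2" by (rule bound(1)) fact
  show "shift_series a c (\<lambda>n. x n + y n) = (\<lambda>n. shift_series a c x n + shift_series a c y n)"
    by (rule ext) (rule shift_series_add)
  show "shift_series a c (\<lambda>n. s * x n) = (\<lambda>n. s * shift_series a c x n)"
    by (rule ext) (rule shift_series_scale)
  show "l2norm (shift_series a c x)
    \<le> sqrt (shift_norm_const a * (\<Sum>k. (coeff_weight a c k)\<^sup>2)) * l2norm x"
    by (rule bound(2)) fact
qed

definition weight_tail :: "(nat \<Rightarrow> complex) \<Rightarrow> (nat \<Rightarrow> complex) \<Rightarrow> nat \<Rightarrow> real" where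
  "weight_tail a c n = (\<Sum>k. (coeff_weight a c (k + Suc n))\<^sup>2)"

lemma weight_tail_tendsto_zero:
  "summable (\<lambda>k. (coeff_weight a c k)\<^sup>2) \<Longrightarrow> weight_tail a c \<longlonglongrightarrow> 0"
  unfolding weight_tail_def using LIMSEQ_Suc[OF suminf_exist_split2] by simp

lemma weight_tail_bound:
  assumes s: "summable (\<lambda>k. (coeff_weight a c k)\<^sup>2)"
  shows "(\<Sum>k<M. (coeff_weight a (\<lambda>k. if n < k then c k else 0) k)\<^sup>2) \<le> weight_tail a c n"
proof -
  have tail_summable: "summable (\<lambda>k. (coeff_weight a (\<lambda>k. if n < k then c k else 0) k)\<^sup>2)"
    by (rule summable_comparison_test'[OF s]) (simp add: coeff_weight_truncate)
  have "(\<Sum>k<M. (coeff_weight a (\<lambda>k. if n < k then c k else 0) k)\<^sup>2)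
      \<le> (\<Sum>k. (coeff_weight a (\<lambda>k. if n < k then c k else 0) k)\<^sup>2)"
    by (rule sum_le_suminf[OF tail_summable]) auto
  also have "\<dots> = weight_tail a c n"
    unfolding weight_tail_def
    by (subst suminf_split_initial_segment[OF tail_summable, of "Suc n"]) (simp add: coeff_weight_truncate)
  finally show ?thesis .
qed

lemma opnorm_poly_shift_minus_shift_series:
  fixes n :: nat
  assumes a0: "a 0 \<noteq> 0" and mono: "\<And>n. cmod (a (Suc n)) \<le> cmod (a n)"
    and sq: "summable (\<lambda>n. (cmod (a n))\<^sup>2)"
    and s: "summable (\<lambda>k. (coeff_weight a c k)\<^sup>2)"
  defines "D \<equiv> \<lambda>x m. poly_shift a c n x m - shift_series a c x m"
  shows "0 \<le> opnorm D" and "opnorm D \<le> sqrt (shift_norm_const a * weight_tail a c n)"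
proof -
  have D: "D x = (\<lambda>m. - shift_series a (\<lambda>k. if n < k then c k else 0) x m)" for x
    by (simp add: D_def poly_shift_minus_shift_series)
  note bound = shift_series_l2_bound[OF a0 mono sq weight_tail_bound[OF s]]
  have unit_ball: "l2norm (D x) \<le> sqrt (shift_norm_const a * weight_tail a c n)"
    if "x \<in> l2" "l2norm x \<le> 1" for x
  proof -
    have "l2norm (D x) \<le> sqrt (shift_norm_const a * weight_tail a c n) * l2norm x"
      using bound(2)[OF that(1)] by (simp add: D l2norm_uminus)
    also have "\<dots> \<le> sqrt (shift_norm_const a * weight_tail a c n)"
      using shift_norm_const_nonneg[OF sq] weight_tail_bound[OF s, where M=0 and n=n]
      by (intro mult_left_le[OF that(2)]) simp
    finally show ?thesis .
  qed
  then show "opnorm D \<le> sqrt (shift_norm_const a * weight_tail a c n)"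
    by (rule opnorm_le)
  have zero: "(\<lambda>_. 0) \<in> l2" "l2norm (\<lambda>_. 0) \<le> 1"
    using l2_partial_sums_bounded[of "\<lambda>_. 0" 0] by simp_all
  have "D (\<lambda>_. 0) \<in> l2"
    unfolding D l2_uminus_iff by (rule bound(1)) fact
  then have "0 \<le> l2norm (D (\<lambda>_. 0))" by (rule l2norm_nonneg)
  also have "\<dots> \<le> opnorm D" by (rule l2norm_le_opnorm[OF unit_ball zero])
  finally show "0 \<le> opnorm D" .
qed

lemma poly_shift_tendsto_shift_series:
  assumes "a 0 \<noteq> 0" "\<And>n. cmod (a (Suc n)) \<le> cmod (a n)" "summable (\<lambda>n. (cmod (a n))\<^sup>2)"
    and s: "summable (\<lambda>k. (coeff_weight a c k)\<^sup>2)"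
  shows "(\<lambda>n. opnorm (\<lambda>x m. poly_shift a c n x m - shift_series a c x m)) \<longlonglongrightarrow> 0"
proof (rule tendsto_sandwich[OF _ _ tendsto_const])
  show "(\<lambda>n. sqrt (shift_norm_const a * weight_tail a c n)) \<longlonglongrightarrow> 0"
    using tendsto_real_sqrt[OF tendsto_mult_right_zero[OF weight_tail_tendsto_zero[OF s]]] by simp
qed (use opnorm_poly_shift_minus_shift_series[OF assms] in \<open>simp_all add: always_eventually\<close>)

lemma bounded_op_poly_shift:
  assumes "a 0 \<noteq> 0" "\<And>n. cmod (a (Suc n)) \<le> cmod (a n)" "summable (\<lambda>n. (cmod (a n))\<^sup>2)"
  shows "bounded_op (poly_shift a c n)"
  unfolding bounded_op_def
proof (intro conjI ballI allI exI)
  note bound = poly_shift_l2_bound[OF assms, of _ c n]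
  fix x y s assume x: "x \<in> l2"
  show "poly_shift a c n x \<in> l2" using bound(1)[OF x] by simp
  show "poly_shift a c n (\<lambda>i. x i + y i) = (\<lambda>i. poly_shift a c n x i + poly_shift a c n y i)"
    by (simp add: fun_eq_iff poly_shift_eq_shift_series shift_series_add)
  show "poly_shift a c n (\<lambda>i. s * x i) = (\<lambda>i. s * poly_shift a c n x i)"
    by (simp add: fun_eq_iff poly_shift_eq_shift_series shift_series_scale)
  show "l2norm (poly_shift a c n x)
    \<le> sqrt (shift_norm_const a * (\<Sum>k\<le>n. (coeff_weight a c k)\<^sup>2)) * l2norm x"
    using bound(2)[OF x] by simp
qed

lemma unit_vector_l2:
  "(\<lambda>i. if i = j then 1 else 0 :: complex) \<in> l2" "l2norm (\<lambda>i. if i = j then 1 else 0 :: complex) \<le> 1"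
proof -
  have "(cmod (if i = j then 1 else 0 :: complex))\<^sup>2 = (if i = j then 1 else 0)" for i
    by simp
  then have "(\<Sum>i<M. (cmod (if i = j then 1 else 0 :: complex))\<^sup>2) \<le> 1" for M
    by (simp add: sum.delta)
  note bound = l2_partial_sums_bounded[OF this]
  then show "(\<lambda>i. if i = j then 1 else 0 :: complex) \<in> l2" "l2norm (\<lambda>i. if i = j then 1 else 0 :: complex) \<le> 1"
    by simp_all
qed

lemma poly_shift_unit_vector:
  "poly_shift a c n (\<lambda>i. if i = 0 then 1 else 0) m = (if 1 \<le> m \<and> m \<le> n then c m * (\<Prod>j<m. a j) else 0)"
proof -
  have "poly_shift a c n (\<lambda>i. if i = 0 then 1 else 0) m
      = (\<Sum>k\<in>{1..n}. if k = m then c m * (\<Prod>j<m. a j) else 0)"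
    unfolding poly_shift_def by (rule sum.cong) (auto simp: wshift_power)
  then show ?thesis by simp
qed

lemma limit_op_unit_vector:
  assumes a0: "a 0 \<noteq> 0" and mono: "\<And>n. cmod (a (Suc n)) \<le> cmod (a n)"
    and sq: "summable (\<lambda>n. (cmod (a n))\<^sup>2)"
    and L: "bounded_op L"
    and lim: "(\<lambda>n. opnorm (\<lambda>x m. poly_shift a c n x m - L x m)) \<longlonglongrightarrow> 0"
    and "1 \<le> m"
  shows "L (\<lambda>i. if i = 0 then 1 else 0) m = c m * (\<Prod>j<m. a j)"
proof -
  define e :: "nat \<Rightarrow> complex" where "e = (\<lambda>i. if i = 0 then 1 else 0)"
  note e = unit_vector_l2[of 0, folded e_def]
  have "cmod (c m * (\<Prod>j<m. a j) - L e m) \<le> opnorm (\<lambda>x i. poly_shift a c n x i - L x i)"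
    if "m \<le> n" for n
  proof -
    obtain C where C: "\<And>x. x \<in> l2 \<Longrightarrow> l2norm x \<le> 1 \<Longrightarrow>
        (\<lambda>i. poly_shift a c n x i - L x i) \<in> l2 \<and> l2norm (\<lambda>i. poly_shift a c n x i - L x i) \<le> C"
      using bounded_op_diff_unit_ball[OF bounded_op_poly_shift[OF a0 mono sq] L] by blast
    have "c m * (\<Prod>j<m. a j) = poly_shift a c n e m"
      using \<open>1 \<le> m\<close> \<open>m \<le> n\<close> by (simp add: e_def poly_shift_unit_vector)
    then have "cmod (c m * (\<Prod>j<m. a j) - L e m) \<le> l2norm (\<lambda>i. poly_shift a c n e i - L e i)"
      using norm_le_l2norm[of "\<lambda>i. poly_shift a c n e i - L e i" m] C[OF e] by simp
    also have "\<dots> \<le> opnorm (\<lambda>x i. poly_shift a c n x i - L x i)"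
      using C by (intro l2norm_le_opnorm[OF _ e]) blast
    finally show ?thesis .
  qed
  then have "cmod (c m * (\<Prod>j<m. a j) - L e m) \<le> 0"
    by (intro LIMSEQ_le_const[OF lim]) blast
  then show ?thesis by (simp add: e_def)
qed

lemma coeff_weight_summable_if_poly_shift_converges:
  assumes a0: "a 0 \<noteq> 0" and mono: "\<And>n. cmod (a (Suc n)) \<le> cmod (a n)"
    and sq: "summable (\<lambda>n. (cmod (a n))\<^sup>2)"
    and L: "bounded_op L"
    and lim: "(\<lambda>n. opnorm (\<lambda>x m. poly_shift a c n x m - L x m)) \<longlonglongrightarrow> 0"
  shows "summable (\<lambda>k. (coeff_weight a c k)\<^sup>2)"
proof -
  define e :: "nat \<Rightarrow> complex" where "e = (\<lambda>i. if i = 0 then 1 else 0)"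
  have "(cmod (L e (Suc k)))\<^sup>2 = (coeff_weight a c (Suc k))\<^sup>2" for k
    using limit_op_unit_vector[OF a0 mono sq L lim, of "Suc k"]
    by (simp add: e_def coeff_weight_def norm_mult)
  moreover have "summable (\<lambda>k. (cmod (L e k))\<^sup>2)"
    using L unit_vector_l2(1)[of 0] by (simp add: e_def bounded_op_def l2_def)
  then have "summable (\<lambda>k. (cmod (L e (Suc k)))\<^sup>2)"
    by (subst summable_Suc_iff)
  ultimately show ?thesis
    by (simp add: summable_Suc_iff[where f="\<lambda>k. (coeff_weight a c k)\<^sup>2", symmetric])
qed

theorem mainTheorem10:
  fixes a c :: "nat \<Rightarrow> complex"
  assumes nz: "\<And>n. a n \<noteq> 0"
    and mono: "\<And>n. cmod (a (Suc n)) \<le> cmod (a n)"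
    and sq: "summable (\<lambda>n. (cmod (a n))\<^sup>2)"
  shows "(\<exists>L. bounded_op L \<and>
            (\<lambda>n. opnorm (\<lambda>x. (\<lambda>m. poly_shift a c n x m - L x m))) \<longlonglongrightarrow> 0)
         \<longleftrightarrow> summable (\<lambda>k. (cmod (c (Suc k)))\<^sup>2 * (cmod (\<Prod>j\<le>k. a j))\<^sup>2)"
proof -
  have "(\<lambda>k. (cmod (c (Suc k)))\<^sup>2 * (cmod (\<Prod>j\<le>k. a j))\<^sup>2) = (\<lambda>k. (coeff_weight a c (Suc k))\<^sup>2)"
    by (simp add: coeff_weight_def lessThan_Suc_atMost power_mult_distrib)
  then have weights: "summable (\<lambda>k. (cmod (c (Suc k)))\<^sup>2 * (cmod (\<Prod>j\<le>k. a j))\<^sup>2)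
      \<longleftrightarrow> summable (\<lambda>k. (coeff_weight a c k)\<^sup>2)"
    using summable_Suc_iff[where f="\<lambda>k. (coeff_weight a c k)\<^sup>2"] by simp
  show ?thesis
    unfolding weights
    using coeff_weight_summable_if_poly_shift_converges[OF nz mono sq]
      bounded_op_shift_series[OF nz mono sq] poly_shift_tendsto_shift_series[OF nz mono sq]
    by blast
qed

end
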